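(* Let $0\le m\le n$ and $\lambda=2^m1^{n-m}$. If $T,T'\in S(\lambda)$ have first-column entries $a_1,\dots,a_n$ and $a'_1,\dots,a'_n$ (top to bottom) with $\mathrm{dep}(a_i)=\mathrm{dep}(a'_i)$ for all $1\le i\le n$, then $T=T'$.
   Context: $\lambda=2^m1^{n-m}$ is the shape with $m$ rows of length $2$ followed by $n-m$ rows of length $1$ (left-justified), $N=n+m$ boxes. $S(\lambda)$: standard Young tableaux of shape $\lambda$ (entries $1,\dots,N$ once each, rows strictly increasing left to right, columns strictly increasing top to bottom). For an entry $v$ of $T$ in column $j$: $\mathrm{dep}(v)$ = (number of entries of column $j$ smaller than $v$) minus (number of entries of column $j+1$ smaller than $v$, or $0$ if there is no column $j+1$). *)

theory Defs
  imports Main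
begin

text \<open>A tableau is represented by its list of columns (left to right), each column
  listed top to bottom.  For the shape lambda = 2^m 1^(n-m) there is one column of
  length n and, if m > 0, a second column of length m.\<close>

definition shape_cols :: "nat \<Rightarrow> nat \<Rightarrow> nat list" where
  "shape_cols n m = (if m = 0 then [n] else [n, m])"

definition SYT :: "nat \<Rightarrow> nat \<Rightarrow> nat list list \<Rightarrow> bool" where
  "SYT n m T \<longleftrightarrow>
     map length T = shape_cols n m \<and>
     (\<forall>c\<in>set T. sorted_wrt (<) c) \<and>
     (\<forall>j i. Suc j < length T \<longrightarrow> i < length (T ! Suc j) \<longrightarrow> T ! j ! i < T ! Suc j ! i) \<and>
     distinct (concat T) \<and>
     set (concat T) = {1..n + m}"

definition col_of :: "nat list list \<Rightarrow> nat \<Rightarrow> nat" where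
  "col_of T v = (LEAST j. j < length T \<and> v \<in> set (T ! j))"

definition count_less :: "nat list \<Rightarrow> nat \<Rightarrow> nat" where
  "count_less c v = card {x \<in> set c. x < v}"

definition dep :: "nat list list \<Rightarrow> nat \<Rightarrow> int" where
  "dep T v = (let j = col_of T v in
      int (count_less (T ! j) v)
      - (if Suc j < length T then int (count_less (T ! Suc j) v) else 0))"

end

theory Submission
  imports Defs
begin

text \<open>If the first column is a_1 < ... < a_n, then exactly i - 1 of the entries below a_i lie
  in the first column and the remaining a_i - i in the second, so dep(a_i) = 2i - 1 - a_i.
  Hence the depths determine the first column, and the second column is its sorted
  complement in {1..N}.\<close>

lemma count_less_nth_sorted:
  assumes "sorted_wrt (<) c" "i < length c"
  shows "count_less c (c ! i) = i"
proof -
  have "{x \<in> set c. x < c ! i} = (!) c ` {..<i}"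
  proof (intro set_eqI iffI)
    fix x assume "x \<in> {x \<in> set c. x < c ! i}"
    then obtain j where j: "j < length c" "x = c ! j" "c ! j < c ! i"
      by (auto simp: in_set_conv_nth)
    with assms have "j < i"
      by (metis not_less_iff_gr_or_eq order.asym sorted_wrt_nth_less)
    with j show "x \<in> (!) c ` {..<i}" by auto
  next
    fix x assume "x \<in> (!) c ` {..<i}"
    with assms show "x \<in> {x \<in> set c. x < c ! i}"
      by (auto simp: sorted_wrt_nth_less)
  qed
  moreover have "inj_on ((!) c) {..<i}"
    using assms by (auto simp: inj_on_def nth_eq_iff_index_eq strict_sorted_iff)
  ultimately show ?thesis
    unfolding count_less_def by (simp add: card_image)
qed

lemma count_less_partition:
  assumes "set a \<inter> set b = {}" "set a \<union> set b = {1..N}" "v \<in> {1..N}"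
  shows "count_less a v + count_less b v = v - 1"
proof -
  have "{x \<in> set a. x < v} \<union> {x \<in> set b. x < v} = {1..<v}"
    using assms by auto
  moreover have "card ({x \<in> set a. x < v} \<union> {x \<in> set b. x < v})
      = card {x \<in> set a. x < v} + card {x \<in> set b. x < v}"
    using assms(1) by (intro card_Un_disjoint) auto
  ultimately show ?thesis
    unfolding count_less_def by simp
qed

lemma SYT_columns:
  assumes "SYT n m T"
  obtains c0 c1 where "T = (if m = 0 then [c0] else [c0, c1])"
    and "length c0 = n" "length c1 = m" "sorted_wrt (<) c0" "sorted_wrt (<) c1"
    and "set c0 \<inter> set c1 = {}" "set c0 \<union> set c1 = {1..n + m}"
proof (cases "m = 0")
  case True
  with assms obtain c0 where "T = [c0]"
    unfolding SYT_def shape_cols_def by (cases T) auto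
  with True assms show ?thesis
    by (intro that[of c0 "[]"]) (auto simp: SYT_def shape_cols_def)
next
  case False
  with assms obtain c0 c1 where "T = [c0, c1]"
    unfolding SYT_def shape_cols_def by (cases T; cases "tl T") auto
  with False assms show ?thesis
    by (intro that[of c0 c1]) (auto simp: SYT_def shape_cols_def)
qed

lemma dep_first_column:
  assumes "SYT n m T" "i < n"
  shows "dep T (T ! 0 ! i) = 2 * int i + 1 - int (T ! 0 ! i)"
proof -
  obtain c0 c1 where T: "T = (if m = 0 then [c0] else [c0, c1])"
    and c0: "length c0 = n" "length c1 = m" "sorted_wrt (<) c0"
    and part: "set c0 \<inter> set c1 = {}" "set c0 \<union> set c1 = {1..n + m}"
    using SYT_columns[OF assms(1)] .
  define v where "v = c0 ! i"
  have "v \<in> set c0" using c0 assms(2) by (simp add: v_def)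
  then have col: "col_of T v = 0"
    unfolding col_of_def using T by (intro Least_eq_0) simp
  have "v \<in> {1..n + m}" using \<open>v \<in> set c0\<close> part by auto
  have "count_less c0 v = i"
    using count_less_nth_sorted c0 assms(2) by (simp add: v_def)
  moreover have "count_less c0 v + count_less c1 v = v - 1"
    using count_less_partition[OF part \<open>v \<in> {1..n + m}\<close>] .
  moreover have "m = 0 \<Longrightarrow> count_less c1 v = 0"
    using c0(2) by (simp add: count_less_def)
  moreover have "dep T v = int (count_less c0 v) - int (count_less c1 v)"
    using col T \<open>m = 0 \<Longrightarrow> count_less c1 v = 0\<close> by (simp add: dep_def Let_def)
  ultimately show ?thesis
    using T \<open>v \<in> {1..n + m}\<close> by (simp add: v_def split: if_splits)
qed

theorem mainTheorem16:
  fixes n m :: nat and T T' :: "nat list list"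
  assumes "m \<le> n"
    and "SYT n m T" and "SYT n m T'"
    and "\<forall>i < n. dep T (T ! 0 ! i) = dep T' (T' ! 0 ! i)"
  shows "T = T'"
proof -
  obtain c0 c1 where T: "T = (if m = 0 then [c0] else [c0, c1])"
    and c0: "length c0 = n" "length c1 = m" "sorted_wrt (<) c0" "sorted_wrt (<) c1"
    and part: "set c0 \<inter> set c1 = {}" "set c0 \<union> set c1 = {1..n + m}"
    using SYT_columns[OF assms(2)] .
  obtain d0 d1 where T': "T' = (if m = 0 then [d0] else [d0, d1])"
    and d0: "length d0 = n" "length d1 = m" "sorted_wrt (<) d0" "sorted_wrt (<) d1"
    and part': "set d0 \<inter> set d1 = {}" "set d0 \<union> set d1 = {1..n + m}"
    using SYT_columns[OF assms(3)] .
  have "T ! 0 = c0" "T' ! 0 = d0" using T T' by simp_all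
  have "c0 ! i = d0 ! i" if "i < n" for i
    using assms(4) dep_first_column[OF assms(2) that] dep_first_column[OF assms(3) that] that
    unfolding \<open>T ! 0 = c0\<close> \<open>T' ! 0 = d0\<close> by simp
  with c0 d0 have "c0 = d0" by (simp add: nth_equalityI)
  moreover have "set c1 = set d1"
    using part part' \<open>c0 = d0\<close> by blast
  then have "c1 = d1"
    using strict_sorted_equal c0(4) d0(4) by blast
  ultimately show ?thesis using T T' by simp
qed

end
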